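(* Let $n=2m+1$ be odd, and let $\mathbf{V}=\{V_{rj}\}$, $V_j$ and $V$ be as described in the context. Let $M$ be uniform on $\{m,m+1\}$, independent of $\mathbf{V}$. For $i\in\{1,\dots,n\}$, given $\mathbf{V}$ and $M$, let $F^i\in\{0,1\}$ satisfy $P(F^i=1\mid\mathbf{V},M)=\frac{1}{m+1}\mathbf{1}(\mathbf{V}^{M,i}\text{ is feasible})$, and let $J^i$ be uniform on $\{j:V_{Mj}\ne V_{Mi}\}$. Define $$\mathbf{V}^i=\begin{cases}\mathbf{V}&V_i=1\\ \mathbf{V}^{M,i}&V_i=0,\ F^i=1\\ \mathbf{V}^{M,i,J^i}&V_i=0,\ F^i=0.\end{cases}$$ Then $\mathcal{L}(\mathbf{V}^i)=\mathcal{L}(\mathbf{V}\mid V_i=1)$. Further, let $V^i=\sum_{j=1}^nV^i_j$ with $V^i_j=(\sum_{r=1}^nV^i_{rj})\bmod 2$, and let $I$ be uniform on $\{1,\dots,n\}$, independent of all other variables. Then $V^s=V^I$ has the $V$-size bias distribution and, writing $F=F^I$, $J=J^I$, $$V^s-V=\mathbf{1}_{\{V_I=0,F=1\}}+2\,\mathbf{1}_{\{V_I=0,\,V_J=0,\,F=0\}}\quad\text{and}\quad V\le V^s\le V+2.$$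
   Context: Standard lightbulb process: $n$ bulbs, all initially off, $n$ stages; at stage $r$ a uniformly random subset of exactly $r$ bulbs is toggled, independently across stages; switch variables $X_{rj}\in\{0,1\}$ ($1$ iff bulb $j$ toggled at stage $r$). Construction of $\mathbf{V}$ for $n=2m+1$: given $\mathbf{X}$, let $B_m$ be uniform on $\{j:X_{mj}=0\}$ and $B_{m+1}$ uniform on $\{j:X_{m+1,j}=1\}$; let $C_m,C_{m+1}$ be independent symmetric Bernoulli variables independent of $\mathbf{X},B_m,B_{m+1}$; set $V_{rj}=X_{rj}$ except $V_{m,B_m}=C_m$ and $V_{m+1,B_{m+1}}=C_{m+1}$; $V_j=(\sum_rV_{rj})\bmod2$, $V=\sum_jV_j$. A $\{0,1\}$-array $\mathbf{e}=\{e_{rj}\}_{r,j=1}^n$ is feasible if $\sum_je_{rj}=r$ for $r\notin\{m,m+1\}$ and $\sum_je_{rj}\in\{m,m+1\}$ for $r\in\{m,m+1\}$. For $r\in\{m,m+1\}$ and $i,j$: $\mathbf{e}^{r,i}$ equals $\mathbf{e}$ except that entry $(r,i)$ is replaced by $1-e_{ri}$; $\mathbf{e}^{r,i,j}$ equals $\mathbf{e}$ with the entries in positions $(r,i)$ and $(r,j)$ interchanged. $\mathbf{V}^{M,i}$, $\mathbf{V}^{M,i,j}$ are defined likewise from $\mathbf{V}$. $V^s$ has the $V$-size bias distribution if $E[Vg(V)]=E[V]E[g(V^s)]$ for all bounded continuous $g$. *)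

theory Defs
  imports "HOL-Probability.Probability"
begin

text \<open>Arrays of switch variables: e r j for stage r and bulb j, r j in {1..n}, values in {0,1}.\<close>
type_synonym arr = "nat \<Rightarrow> nat \<Rightarrow> nat"

definition X_pmf :: "nat \<Rightarrow> arr pmf" where
  "X_pmf n = map_pmf (\<lambda>S r j. if j \<in> S r then 1 else 0)
     (Pi_pmf {1..n} {} (\<lambda>r. pmf_of_set {S. S \<subseteq> {1..n} \<and> card S = r}))"

definition upd_entry :: "arr \<Rightarrow> nat \<Rightarrow> nat \<Rightarrow> nat \<Rightarrow> arr" where
  "upd_entry e r j v = e(r := (e r)(j := v))"

definition V_pmf :: "nat \<Rightarrow> arr pmf" where
  "V_pmf m = do {
     X \<leftarrow> X_pmf (2*m+1);
     Bm \<leftarrow> pmf_of_set {j \<in> {1..2*m+1}. X m j = 0};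
     Bm1 \<leftarrow> pmf_of_set {j \<in> {1..2*m+1}. X (m+1) j = 1};
     Cm \<leftarrow> bernoulli_pmf (1/2);
     Cm1 \<leftarrow> bernoulli_pmf (1/2);
     return_pmf (upd_entry (upd_entry X m Bm (if Cm then 1 else 0)) (m+1) Bm1 (if Cm1 then 1 else 0))
   }"

definition bulb :: "nat \<Rightarrow> arr \<Rightarrow> nat \<Rightarrow> nat" where
  "bulb m e j = (\<Sum>r=1..2*m+1. e r j) mod 2"

definition Vtot :: "nat \<Rightarrow> arr \<Rightarrow> nat" where
  "Vtot m e = (\<Sum>j=1..2*m+1. bulb m e j)"

definition feasible :: "nat \<Rightarrow> arr \<Rightarrow> bool" where
  "feasible m e \<longleftrightarrow>
     (\<forall>r\<in>{1..2*m+1}. \<forall>j\<in>{1..2*m+1}. e r j \<in> {0,1}) \<and>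
     (\<forall>r\<in>{1..2*m+1} - {m, m+1}. (\<Sum>j=1..2*m+1. e r j) = r) \<and>
     (\<forall>r\<in>{m, m+1}. (\<Sum>j=1..2*m+1. e r j) \<in> {m, m+1})"

text \<open>e^{r,i}: flip entry (r,i); e^{r,i,j}: interchange entries (r,i) and (r,j).\<close>
definition flip :: "arr \<Rightarrow> nat \<Rightarrow> nat \<Rightarrow> arr" where
  "flip e r i = upd_entry e r i (1 - e r i)"

definition swap :: "arr \<Rightarrow> nat \<Rightarrow> nat \<Rightarrow> nat \<Rightarrow> arr" where
  "swap e r i j = e(r := (e r)(i := e r j, j := e r i))"

definition joint :: "nat \<Rightarrow> nat \<Rightarrow> (arr \<times> nat \<times> bool \<times> nat) pmf" where
  "joint m i = do {
     V \<leftarrow> V_pmf m;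
     M \<leftarrow> pmf_of_set {m, m+1};
     F \<leftarrow> bernoulli_pmf (if feasible m (flip V M i) then 1 / real (m+1) else 0);
     J \<leftarrow> pmf_of_set {j \<in> {1..2*m+1}. V M j \<noteq> V M i};
     return_pmf (V, M, F, J)
   }"

definition Vi :: "nat \<Rightarrow> arr \<Rightarrow> nat \<Rightarrow> bool \<Rightarrow> nat \<Rightarrow> nat \<Rightarrow> arr" where
  "Vi m V M F J i =
     (if bulb m V i = 1 then V else if F then flip V M i else swap V M i J)"

definition full :: "nat \<Rightarrow> (nat \<times> arr \<times> nat \<times> bool \<times> nat) pmf" where
  "full m = do {
     I \<leftarrow> pmf_of_set {1..2*m+1};
     (V, M, F, J) \<leftarrow> joint m I;
     return_pmf (I, V, M, F, J)
   }"

end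

theory Submission
  imports Defs
begin

text \<open>
  V is uniform on the feasible arrays: rows m and m+1 of X are uniform subsets of sizes m and
  m+1, and adding (resp. removing) a uniform element with probability 1/2 makes each of them
  uniform on the subsets of size m or m+1, as the two binomial coefficients agree for n = 2m+1.
  Complementing row m toggles every bulb, so conditioning on V_i = 1 gives the uniform law on
  half of the feasible arrays. To check that V^i has this law, fix an array w with bulb i on and
  let a be the number of entries of row M of w that differ from entry i. Then w arises from
  w^{M,i}, which is feasible iff a = m, by a flip with probability 1/(m+1), and from each of the
  a arrays w^{M,i,J} by a swap with probability (1 - [2m+1-a = m]/(m+1))/(2m+1-a); these add
  up to 1 for a \<in> {m, m+1}. Averaging over a uniform I weights each array by its number of
  bulbs on, which is the size bias, and V^s - V counts the bulbs switched on by the flip or swap.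
\<close>

definition row_of :: "nat set \<Rightarrow> nat \<Rightarrow> nat" where
  "row_of S = (\<lambda>j. if j \<in> S then 1 else 0)"

definition ksubsets :: "nat \<Rightarrow> nat \<Rightarrow> nat set set" where
  "ksubsets n k = {S. S \<subseteq> {1..n} \<and> card S = k}"

lemma inj_row_of: "inj row_of"
proof (rule injI)
  fix S T assume "row_of S = row_of T"
  hence "\<And>x. (x \<in> S) = (x \<in> T)" unfolding row_of_def fun_eq_iff by (metis one_neq_zero)
  thus "S = T" by blast
qed

lemma row_of_eq_iff [simp]: "row_of S = row_of T \<longleftrightarrow> S = T"
  using inj_row_of by (auto dest: injD)

lemma finite_ksubsets [simp]: "finite (ksubsets n k)"
  unfolding ksubsets_def by (rule finite_subset[of _ "Pow {1..n}"]) auto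

lemma ksubsetsD:
  assumes "S \<in> ksubsets n k"
  shows "finite S" "S \<subseteq> {1..n}" "card S = k"
  using assms finite_subset[of S "{1..n}"] by (auto simp: ksubsets_def)

lemma card_ksubsets: "card (ksubsets n k) = n choose k"
  unfolding ksubsets_def using n_subsets[of "{1..n}" k] by simp

lemma ksubsets_nonempty: "k \<le> n \<Longrightarrow> ksubsets n k \<noteq> {}"
proof -
  assume "k \<le> n"
  hence "{1..k} \<in> ksubsets n k" by (auto simp: ksubsets_def)
  thus ?thesis by blast
qed

lemma X_pmf_rows:
  "X_pmf n = Pi_pmf {1..n} (\<lambda>_. 0) (\<lambda>r. pmf_of_set (row_of ` ksubsets n r))"
proof -
  have "X_pmf n = map_pmf (\<lambda>h. row_of \<circ> h) (Pi_pmf {1..n} {} (\<lambda>r. pmf_of_set (ksubsets n r)))"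
    unfolding X_pmf_def ksubsets_def row_of_def comp_def ..
  also have "\<dots> = Pi_pmf {1..n} (\<lambda>_. 0) (\<lambda>r. map_pmf row_of (pmf_of_set (ksubsets n r)))"
    by (rule Pi_pmf_map[symmetric]) (auto simp: row_of_def)
  also have "\<dots> = Pi_pmf {1..n} (\<lambda>_. 0) (\<lambda>r. pmf_of_set (row_of ` ksubsets n r))"
    by (intro Pi_pmf_cong refl map_pmf_of_set_inj)
       (auto intro: inj_on_subset[OF inj_row_of] simp: ksubsets_nonempty)
  finally show ?thesis .
qed

lemma pmf_bind_bernoulli:
  assumes "0 \<le> p" "p \<le> 1"
  shows "pmf (bind_pmf (bernoulli_pmf p) f) x = p * pmf (f True) x + (1 - p) * pmf (f False) x"
proof -
  have "pmf (bind_pmf (bernoulli_pmf p) f) x = (\<Sum>c\<in>UNIV. pmf (bernoulli_pmf p) c *\<^sub>R pmf (f c) x)"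
    unfolding pmf_bind by (rule integral_measure_pmf) auto
  thus ?thesis using assms by (simp add: UNIV_bool)
qed

lemma sum_sum_of_bool_card:
  assumes "finite A" "\<And>a. a \<in> A \<Longrightarrow> finite (B a)"
  shows "(\<Sum>a\<in>A. \<Sum>b\<in>B a. of_bool (P a b) :: real) = card {(a, b). a \<in> A \<and> b \<in> B a \<and> P a b}"
proof -
  have "(\<Sum>a\<in>A. \<Sum>b\<in>B a. of_bool (P a b) :: real) = (\<Sum>z\<in>Sigma A B. of_bool (P (fst z) (snd z)))"
    using assms by (subst sum.Sigma) (auto simp: case_prod_beta)
  also have "\<dots> = card (Sigma A B \<inter> {z. P (fst z) (snd z)})"
    using assms by (subst sum_of_bool_eq) auto
  also have "Sigma A B \<inter> {z. P (fst z) (snd z)} = {(a, b). a \<in> A \<and> b \<in> B a \<and> P a b}" by auto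
  finally show ?thesis .
qed

lemma fair_coin_choice_commute:
  "bind_pmf (bernoulli_pmf (1/2)) (\<lambda>c. return_pmf (if c then x else y))
   = bind_pmf (bernoulli_pmf (1/2)) (\<lambda>c. return_pmf (if c then y else x))"
  by (rule pmf_eqI) (simp add: pmf_bind_bernoulli)

lemma uniform_half_step:
  assumes fin: "finite A" and disj: "A \<inter> B = {}" and card: "card B = card A" and "A \<noteq> {}"
    and N: "\<And>S. S \<in> A \<Longrightarrow> finite (N S) \<and> card (N S) = d" and "d > 0"
    and hits: "\<And>T. card {(S, b). S \<in> A \<and> b \<in> N S \<and> g S b = T} = (if T \<in> B then d else 0)"
  shows "bind_pmf (pmf_of_set A) (\<lambda>S. bind_pmf (pmf_of_set (N S))
           (\<lambda>b. bind_pmf (bernoulli_pmf (1/2)) (\<lambda>c. return_pmf (if c then g S b else S))))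
         = pmf_of_set (A \<union> B)"
proof (rule pmf_eqI)
  fix T
  have cA: "card A > 0" using fin \<open>A \<noteq> {}\<close> by (simp add: card_gt_0_iff)
  have NS: "N S \<noteq> {}" if "S \<in> A" for S using N[OF that] \<open>d > 0\<close> by auto
  have coin: "pmf (bind_pmf (bernoulli_pmf (1/2)) f) x = (pmf (f True) x + pmf (f False) x) / 2"
    for f :: "bool \<Rightarrow> 'a pmf" and x
    by (simp add: pmf_bind_bernoulli field_simps)
  have "pmf (bind_pmf (pmf_of_set A) (\<lambda>S. bind_pmf (pmf_of_set (N S))
           (\<lambda>b. bind_pmf (bernoulli_pmf (1/2)) (\<lambda>c. return_pmf (if c then g S b else S))))) T
      = (\<Sum>S\<in>A. (\<Sum>b\<in>N S. of_bool (g S b = T) + of_bool (S = T)) / (2 * d)) / card A"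
    using fin \<open>A \<noteq> {}\<close> NS N
    by (simp add: pmf_bind_pmf_of_set coin sum_divide_distrib[symmetric]
                  indicator_def of_bool_def cong: sum.cong)
  also have "\<dots> = ((\<Sum>S\<in>A. \<Sum>b\<in>N S. of_bool (g S b = T)) + real d * of_bool (T \<in> A))
                  / (2 * real d * real (card A))"
  proof -
    have "(\<Sum>S\<in>A. \<Sum>b\<in>N S. of_bool (S = T) :: real) = real d * of_bool (T \<in> A)"
      using fin N by (simp add: sum_distrib_left[symmetric] of_bool_def sum.delta' cong: sum.cong)
    thus ?thesis by (simp add: sum.distrib sum_divide_distrib[symmetric] del: sum_of_bool_eq)
  qed
  also have "(\<Sum>S\<in>A. \<Sum>b\<in>N S. of_bool (g S b = T) :: real) = real d * of_bool (T \<in> B)"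
    using sum_sum_of_bool_card[of A N "\<lambda>S b. g S b = T"] fin N hits by simp
  also have "(real d * of_bool (T \<in> B) + real d * of_bool (T \<in> A)) / (2 * real d * real (card A))
      = pmf (pmf_of_set (A \<union> B)) T"
  proof -
    have "finite B" using card cA card_ge_0_finite by metis
    thus ?thesis using fin disj card cA \<open>d > 0\<close> \<open>A \<noteq> {}\<close>
      by (auto simp: indicator_def card_Un_disjoint)
  qed
  finally show "pmf (bind_pmf (pmf_of_set A) (\<lambda>S. bind_pmf (pmf_of_set (N S))
           (\<lambda>b. bind_pmf (bernoulli_pmf (1/2)) (\<lambda>c. return_pmf (if c then g S b else S))))) T
      = pmf (pmf_of_set (A \<union> B)) T" .
qed

lemma card_insertions:
  "card {(S, b). S \<in> ksubsets n k \<and> b \<in> {1..n} - S \<and> insert b S = T}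
   = (if T \<in> ksubsets n (Suc k) then Suc k else 0)"
proof -
  have "{(S, b). S \<in> ksubsets n k \<and> b \<in> {1..n} - S \<and> insert b S = T}
        = (if T \<in> ksubsets n (Suc k) then (\<lambda>b. (T - {b}, b)) ` T else {})"
  proof (intro equalityI subsetI)
    fix z assume "z \<in> {(S, b). S \<in> ksubsets n k \<and> b \<in> {1..n} - S \<and> insert b S = T}"
    then obtain S b where z: "z = (S, b)" "S \<in> ksubsets n k" "b \<in> {1..n} - S" "T = insert b S"
      by auto
    note S = ksubsetsD[OF z(2)]
    have "T \<in> ksubsets n (Suc k)" "b \<in> T" using S z by (auto simp: ksubsets_def)
    moreover have "S = T - {b}" using z by auto
    ultimately show "z \<in> (if T \<in> ksubsets n (Suc k) then (\<lambda>b. (T - {b}, b)) ` T else {})"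
      using z(1) by simp
  next
    fix z assume z: "z \<in> (if T \<in> ksubsets n (Suc k) then (\<lambda>b. (T - {b}, b)) ` T else {})"
    then obtain b where T: "T \<in> ksubsets n (Suc k)" and b: "b \<in> T" "z = (T - {b}, b)"
      by (auto split: if_splits)
    note T = ksubsetsD[OF T]
    have "T - {b} \<in> ksubsets n k" using T b by (auto simp: ksubsets_def)
    thus "z \<in> {(S, b). S \<in> ksubsets n k \<and> b \<in> {1..n} - S \<and> insert b S = T}"
      using T b by auto
  qed
  moreover have "card ((\<lambda>b. (T - {b}, b)) ` T) = card T"
    by (rule card_image) (auto simp: inj_on_def)
  ultimately show ?thesis by (auto dest: ksubsetsD)
qed

lemma card_deletions:
  "card {(S, b). S \<in> ksubsets n (Suc k) \<and> b \<in> S \<and> S - {b} = T}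
   = (if T \<in> ksubsets n k then n - k else 0)"
proof -
  have "{(S, b). S \<in> ksubsets n (Suc k) \<and> b \<in> S \<and> S - {b} = T}
        = (if T \<in> ksubsets n k then (\<lambda>b. (insert b T, b)) ` ({1..n} - T) else {})"
  proof (intro equalityI subsetI)
    fix z assume "z \<in> {(S, b). S \<in> ksubsets n (Suc k) \<and> b \<in> S \<and> S - {b} = T}"
    then obtain S b where z: "z = (S, b)" "S \<in> ksubsets n (Suc k)" "b \<in> S" "T = S - {b}"
      by auto
    note S = ksubsetsD[OF z(2)]
    have "T \<in> ksubsets n k" "b \<in> {1..n} - T" using S z by (auto simp: ksubsets_def)
    moreover have "S = insert b T" using z by auto
    ultimately show "z \<in> (if T \<in> ksubsets n k then (\<lambda>b. (insert b T, b)) ` ({1..n} - T) else {})"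
      using z(1) by simp
  next
    fix z assume z: "z \<in> (if T \<in> ksubsets n k then (\<lambda>b. (insert b T, b)) ` ({1..n} - T) else {})"
    then obtain b where T: "T \<in> ksubsets n k" and b: "b \<in> {1..n} - T" "z = (insert b T, b)"
      by (auto split: if_splits)
    note T = ksubsetsD[OF T]
    have "insert b T \<in> ksubsets n (Suc k)" using T b by (auto simp: ksubsets_def)
    thus "z \<in> {(S, b). S \<in> ksubsets n (Suc k) \<and> b \<in> S \<and> S - {b} = T}"
      using b by auto
  qed
  moreover have "card ((\<lambda>b. (insert b T, b)) ` ({1..n} - T)) = card ({1..n} - T)"
    by (rule card_image) (auto simp: inj_on_def)
  moreover have "card ({1..n} - T) = n - k" if "T \<in> ksubsets n k"
    using ksubsetsD[OF that] by (simp add: card_Diff_subset)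
  ultimately show ?thesis by auto
qed

lemma card_middle_ksubsets: "card (ksubsets (2*m+1) (m+1)) = card (ksubsets (2*m+1) m)"
  unfolding card_ksubsets using binomial_symmetric[of m "2*m+1"] by simp

lemma disjoint_ksubsets: "k \<noteq> l \<Longrightarrow> ksubsets n k \<inter> ksubsets n l = {}"
  by (auto simp: ksubsets_def)

lemma uniform_middle_row_insert:
  "bind_pmf (pmf_of_set (ksubsets (2*m+1) m)) (\<lambda>S. bind_pmf (pmf_of_set ({1..2*m+1} - S))
     (\<lambda>b. bind_pmf (bernoulli_pmf (1/2)) (\<lambda>c. return_pmf (if c then insert b S else S))))
   = pmf_of_set (ksubsets (2*m+1) m \<union> ksubsets (2*m+1) (m+1))"
proof (rule uniform_half_step)
  show "card {(S, b). S \<in> ksubsets (2*m+1) m \<and> b \<in> {1..2*m+1} - S \<and> insert b S = T}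
        = (if T \<in> ksubsets (2*m+1) (m+1) then m+1 else 0)" for T
    using card_insertions[of "2*m+1" m T] by simp
  show "finite ({1..2*m+1} - S) \<and> card ({1..2*m+1} - S) = m+1" if "S \<in> ksubsets (2*m+1) m" for S
    using ksubsetsD[OF that] by (simp add: card_Diff_subset)
qed (use card_middle_ksubsets[of m] in \<open>simp_all add: disjoint_ksubsets ksubsets_nonempty\<close>)

lemma uniform_middle_row_delete:
  "bind_pmf (pmf_of_set (ksubsets (2*m+1) (m+1))) (\<lambda>S. bind_pmf (pmf_of_set S)
     (\<lambda>b. bind_pmf (bernoulli_pmf (1/2)) (\<lambda>c. return_pmf (if c then S else S - {b}))))
   = pmf_of_set (ksubsets (2*m+1) m \<union> ksubsets (2*m+1) (m+1))"
proof -
  have "bind_pmf (pmf_of_set (ksubsets (2*m+1) (m+1))) (\<lambda>S. bind_pmf (pmf_of_set S)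
          (\<lambda>b. bind_pmf (bernoulli_pmf (1/2)) (\<lambda>c. return_pmf (if c then S - {b} else S))))
        = pmf_of_set (ksubsets (2*m+1) (m+1) \<union> ksubsets (2*m+1) m)"
  proof (rule uniform_half_step)
    show "card {(S, b). S \<in> ksubsets (2*m+1) (m+1) \<and> b \<in> S \<and> S - {b} = T}
          = (if T \<in> ksubsets (2*m+1) m then m+1 else 0)" for T
      using card_deletions[of "2*m+1" m T] by simp
  qed (use card_middle_ksubsets[of m] in \<open>auto simp: disjoint_ksubsets ksubsets_nonempty dest: ksubsetsD\<close>)
  thus ?thesis by (simp add: fair_coin_choice_commute Un_commute)
qed

definition resample_entry :: "nat \<Rightarrow> nat \<Rightarrow> (nat \<Rightarrow> nat) \<Rightarrow> (nat \<Rightarrow> nat) pmf" where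
  "resample_entry n v w = do {
     b \<leftarrow> pmf_of_set {j \<in> {1..n}. w j = v};
     c \<leftarrow> bernoulli_pmf (1/2);
     return_pmf (w(b := if c then 1 else 0))
   }"

lemma resample_entry_zero_row_of:
  assumes S: "S \<in> ksubsets n k" and "k < n"
  shows "resample_entry n 0 (row_of S) = map_pmf row_of (bind_pmf (pmf_of_set ({1..n} - S))
           (\<lambda>b. bind_pmf (bernoulli_pmf (1/2)) (\<lambda>c. return_pmf (if c then insert b S else S))))"
proof -
  note S = ksubsetsD[OF S]
  have "card ({1..n} - S) = n - k" using S by (simp add: card_Diff_subset)
  hence "{1..n} - S \<noteq> {}" using \<open>k < n\<close> by (metis card.empty less_irrefl zero_less_diff)
  moreover have "{j \<in> {1..n}. row_of S j = 0} = {1..n} - S" by (auto simp: row_of_def)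
  ultimately show ?thesis
    unfolding resample_entry_def map_bind_pmf map_return_pmf
    by (intro bind_pmf_cong refl) (auto simp: row_of_def fun_eq_iff)
qed

lemma resample_entry_one_row_of:
  assumes S: "S \<in> ksubsets n k" and "k > 0"
  shows "resample_entry n 1 (row_of S) = map_pmf row_of (bind_pmf (pmf_of_set S)
           (\<lambda>b. bind_pmf (bernoulli_pmf (1/2)) (\<lambda>c. return_pmf (if c then S else S - {b}))))"
proof -
  note S = ksubsetsD[OF S]
  hence "S \<noteq> {}" using \<open>k > 0\<close> by auto
  moreover have "{j \<in> {1..n}. row_of S j = 1} = S" using S by (auto simp: row_of_def)
  ultimately show ?thesis
    unfolding resample_entry_def map_bind_pmf map_return_pmf using S
    by (intro bind_pmf_cong refl) (auto simp: row_of_def fun_eq_iff)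
qed

lemma resample_entry_zero_uniform:
  "bind_pmf (pmf_of_set (ksubsets (2*m+1) m)) (\<lambda>S. resample_entry (2*m+1) 0 (row_of S))
   = map_pmf row_of (pmf_of_set (ksubsets (2*m+1) m \<union> ksubsets (2*m+1) (m+1)))"
proof -
  have "bind_pmf (pmf_of_set (ksubsets (2*m+1) m)) (\<lambda>S. resample_entry (2*m+1) 0 (row_of S))
        = bind_pmf (pmf_of_set (ksubsets (2*m+1) m)) (\<lambda>S. map_pmf row_of
            (bind_pmf (pmf_of_set ({1..2*m+1} - S))
              (\<lambda>b. bind_pmf (bernoulli_pmf (1/2)) (\<lambda>c. return_pmf (if c then insert b S else S)))))"
  proof (intro bind_pmf_cong refl)
    fix S assume "S \<in> set_pmf (pmf_of_set (ksubsets (2*m+1) m))"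
    hence "S \<in> ksubsets (2*m+1) m" using ksubsets_nonempty[of m "2*m+1"] by simp
    thus "resample_entry (2*m+1) 0 (row_of S) = map_pmf row_of (bind_pmf (pmf_of_set ({1..2*m+1} - S))
            (\<lambda>b. bind_pmf (bernoulli_pmf (1/2)) (\<lambda>c. return_pmf (if c then insert b S else S))))"
      by (rule resample_entry_zero_row_of) simp
  qed
  thus ?thesis by (simp only: map_bind_pmf[symmetric] uniform_middle_row_insert)
qed

lemma resample_entry_one_uniform:
  "bind_pmf (pmf_of_set (ksubsets (2*m+1) (m+1))) (\<lambda>S. resample_entry (2*m+1) 1 (row_of S))
   = map_pmf row_of (pmf_of_set (ksubsets (2*m+1) m \<union> ksubsets (2*m+1) (m+1)))"
proof -
  have "bind_pmf (pmf_of_set (ksubsets (2*m+1) (m+1))) (\<lambda>S. resample_entry (2*m+1) 1 (row_of S))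
        = bind_pmf (pmf_of_set (ksubsets (2*m+1) (m+1))) (\<lambda>S. map_pmf row_of
            (bind_pmf (pmf_of_set S)
              (\<lambda>b. bind_pmf (bernoulli_pmf (1/2)) (\<lambda>c. return_pmf (if c then S else S - {b})))))"
  proof (intro bind_pmf_cong refl)
    fix S assume "S \<in> set_pmf (pmf_of_set (ksubsets (2*m+1) (m+1)))"
    hence "S \<in> ksubsets (2*m+1) (m+1)" using ksubsets_nonempty[of "m+1" "2*m+1"] by simp
    thus "resample_entry (2*m+1) 1 (row_of S) = map_pmf row_of (bind_pmf (pmf_of_set S)
            (\<lambda>b. bind_pmf (bernoulli_pmf (1/2)) (\<lambda>c. return_pmf (if c then S else S - {b}))))"
      by (rule resample_entry_one_row_of) simp
  qed
  thus ?thesis by (simp only: map_bind_pmf[symmetric] uniform_middle_row_delete)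
qed

text \<open>Row r of V is row r of X, resampled by (B_m, C_m) for r = m and by (B_{m+1}, C_{m+1})
  for r = m+1.\<close>
definition resample_row :: "nat \<Rightarrow> nat \<Rightarrow> (nat \<Rightarrow> nat) \<Rightarrow> (nat \<Rightarrow> nat) pmf" where
  "resample_row m r = (if r = m then resample_entry (2*m+1) 0
                       else if r = m+1 then resample_entry (2*m+1) 1 else return_pmf)"

definition row_set :: "nat \<Rightarrow> nat \<Rightarrow> (nat \<Rightarrow> nat) set" where
  "row_set m r = (if r \<in> {m, m+1} then row_of ` (ksubsets (2*m+1) m \<union> ksubsets (2*m+1) (m+1))
                  else row_of ` ksubsets (2*m+1) r)"

lemma resample_uniform_row:
  assumes "r \<in> {1..2*m+1}"
  shows "bind_pmf (pmf_of_set (row_of ` ksubsets (2*m+1) r)) (resample_row m r)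
         = pmf_of_set (row_set m r)"
proof -
  have inj: "inj_on row_of X" for X by (rule inj_on_subset[OF inj_row_of]) simp
  have ne: "ksubsets (2*m+1) r \<noteq> {}" using assms by (intro ksubsets_nonempty) simp
  have ne2: "ksubsets (2*m+1) m \<union> ksubsets (2*m+1) (m+1) \<noteq> {}"
    using ksubsets_nonempty[of m "2*m+1"] by auto
  have "bind_pmf (pmf_of_set (row_of ` ksubsets (2*m+1) r)) (resample_row m r)
      = bind_pmf (pmf_of_set (ksubsets (2*m+1) r)) (\<lambda>S. resample_row m r (row_of S))"
    using ne by (simp add: map_pmf_of_set_inj[OF inj, symmetric] bind_map_pmf)
  also have "\<dots> = pmf_of_set (row_set m r)"
  proof -
    consider "r = m" | "r = m+1" | "r \<notin> {m, m+1}" by auto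
    thus ?thesis
    proof cases
      case 1
      thus ?thesis using resample_entry_zero_uniform[of m] ne2
        by (simp add: resample_row_def row_set_def map_pmf_of_set_inj[OF inj])
    next
      case 2
      thus ?thesis using resample_entry_one_uniform[of m] ne2
        by (simp add: resample_row_def row_set_def map_pmf_of_set_inj[OF inj])
    next
      case 3
      thus ?thesis using ne
        by (simp add: resample_row_def row_set_def map_pmf_def[symmetric] map_pmf_of_set_inj[OF inj])
    qed
  qed
  finally show ?thesis .
qed

lemma resample_rows:
  assumes m: "m \<ge> 1" and X0: "\<And>r. r \<notin> {1..2*m+1} \<Longrightarrow> X r = (\<lambda>_. 0)"
  shows "Pi_pmf {1..2*m+1} (\<lambda>_. 0) (\<lambda>r. resample_row m r (X r)) = do {
     Bm \<leftarrow> pmf_of_set {j \<in> {1..2*m+1}. X m j = 0};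
     Bm1 \<leftarrow> pmf_of_set {j \<in> {1..2*m+1}. X (m+1) j = 1};
     Cm \<leftarrow> bernoulli_pmf (1/2);
     Cm1 \<leftarrow> bernoulli_pmf (1/2);
     return_pmf (upd_entry (upd_entry X m Bm (if Cm then 1 else 0)) (m+1) Bm1 (if Cm1 then 1 else 0))
   }"
proof -
  define R where "R = {1..2*m+1} - {m, m+1}"
  have finR: "finite R" unfolding R_def by simp
  have dec: "{1..2*m+1} = insert m (insert (m+1) R)" using m unfolding R_def by auto
  have notin: "m \<notin> insert (m+1) R" "m+1 \<notin> R" unfolding R_def by auto
  define G where "G = (\<lambda>r. if r \<in> R then X r else (\<lambda>_. 0::nat))"
  have kept: "Pi_pmf R (\<lambda>_. 0) (\<lambda>r. resample_row m r (X r)) = return_pmf G"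
  proof -
    have "Pi_pmf R (\<lambda>_. 0) (\<lambda>r. resample_row m r (X r)) = Pi_pmf R (\<lambda>_. 0) (\<lambda>r. return_pmf (X r))"
      by (intro Pi_pmf_cong refl) (auto simp: resample_row_def R_def)
    thus ?thesis using finR by (simp add: G_def)
  qed
  have GX: "(G(m+1 := y'))(m := y) = X(m := y, m+1 := y')" for y y'
    using X0 unfolding G_def R_def by (auto simp: fun_eq_iff)
  have "Pi_pmf {1..2*m+1} (\<lambda>_. 0) (\<lambda>r. resample_row m r (X r)) = do {
          y \<leftarrow> resample_row m m (X m);
          f \<leftarrow> Pi_pmf (insert (m+1) R) (\<lambda>_. 0) (\<lambda>r. resample_row m r (X r));
          return_pmf (f(m := y))}"
    unfolding dec using finR notin by (subst Pi_pmf_insert') auto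
  also have "\<dots> = do {
          y \<leftarrow> resample_row m m (X m);
          y' \<leftarrow> resample_row m (m+1) (X (m+1));
          return_pmf ((G(m+1 := y'))(m := y))}"
    using finR notin by (subst Pi_pmf_insert') (auto simp: kept bind_assoc_pmf bind_return_pmf)
  also have "\<dots> = do {
          Bm \<leftarrow> pmf_of_set {j \<in> {1..2*m+1}. X m j = 0};
          Cm \<leftarrow> bernoulli_pmf (1/2);
          Bm1 \<leftarrow> pmf_of_set {j \<in> {1..2*m+1}. X (m+1) j = 1};
          Cm1 \<leftarrow> bernoulli_pmf (1/2);
          return_pmf (upd_entry (upd_entry X m Bm (if Cm then 1 else 0)) (m+1) Bm1 (if Cm1 then 1 else 0))}"
    unfolding GX by (simp add: resample_row_def resample_entry_def bind_assoc_pmf bind_return_pmf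
                               upd_entry_def)
  also have "\<dots> = do {
          Bm \<leftarrow> pmf_of_set {j \<in> {1..2*m+1}. X m j = 0};
          Bm1 \<leftarrow> pmf_of_set {j \<in> {1..2*m+1}. X (m+1) j = 1};
          Cm \<leftarrow> bernoulli_pmf (1/2);
          Cm1 \<leftarrow> bernoulli_pmf (1/2);
          return_pmf (upd_entry (upd_entry X m Bm (if Cm then 1 else 0)) (m+1) Bm1 (if Cm1 then 1 else 0))}"
    by (subst bind_commute_pmf) (rule refl)
  finally show ?thesis .
qed

text \<open>Arrays are functions on nat \<times> nat, so feasible arrays are padded with zeros outside
  {1..n} \<times> {1..n}; X and V vanish there as well.\<close>
definition feasible_arrays :: "nat \<Rightarrow> arr set" where
  "feasible_arrays m =
     {e. (\<forall>r j. r \<notin> {1..2*m+1} \<or> j \<notin> {1..2*m+1} \<longrightarrow> e r j = 0) \<and> feasible m e}"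

lemma row_of_ksubsets_iff:
  "w \<in> row_of ` ksubsets n k \<longleftrightarrow>
     (\<forall>j. w j \<in> {0,1}) \<and> (\<forall>j. j \<notin> {1..n} \<longrightarrow> w j = 0) \<and> sum w {1..n} = k"
proof
  assume "w \<in> row_of ` ksubsets n k"
  then obtain S where w: "w = row_of S" and S: "S \<in> ksubsets n k" by auto
  note S = ksubsetsD[OF S]
  have "sum w {1..n} = card ({1..n} \<inter> S)"
    unfolding w row_of_def by (simp add: sum.If_cases Int_def)
  also have "{1..n} \<inter> S = S" using S by blast
  finally have "sum w {1..n} = k" using S by simp
  moreover have "\<forall>j. j \<notin> {1..n} \<longrightarrow> w j = 0" using S unfolding w row_of_def by auto
  ultimately show "(\<forall>j. w j \<in> {0,1}) \<and> (\<forall>j. j \<notin> {1..n} \<longrightarrow> w j = 0) \<and> sum w {1..n} = k"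
    by (simp add: w row_of_def)
next
  assume w: "(\<forall>j. w j \<in> {0,1}) \<and> (\<forall>j. j \<notin> {1..n} \<longrightarrow> w j = 0) \<and> sum w {1..n} = k"
  define S where "S = {j \<in> {1..n}. w j = 1}"
  have wS: "w = row_of S"
  proof
    fix j show "w j = row_of S j" using w by (cases "j \<in> {1..n}") (auto simp: S_def row_of_def)
  qed
  have "sum w {1..n} = card S"
    unfolding wS row_of_def by (simp add: sum.If_cases Int_def S_def)
  hence "S \<in> ksubsets n k" using w unfolding ksubsets_def by (auto simp: S_def)
  thus "w \<in> row_of ` ksubsets n k" using wS by blast
qed

lemma row_set_iff:
  assumes "r \<in> {1..2*m+1}"
  shows "w \<in> row_set m r \<longleftrightarrow> (\<forall>j. w j \<in> {0,1}) \<and> (\<forall>j. j \<notin> {1..2*m+1} \<longrightarrow> w j = 0) \<and>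
           (r \<in> {m, m+1} \<longrightarrow> sum w {1..2*m+1} \<in> {m, m+1}) \<and>
           (r \<notin> {m, m+1} \<longrightarrow> sum w {1..2*m+1} = r)"
proof (cases "r \<in> {m, m+1}")
  case True
  thus ?thesis unfolding row_set_def if_P[OF True] image_Un Un_iff row_of_ksubsets_iff by auto
next
  case False
  thus ?thesis unfolding row_set_def if_not_P[OF False] row_of_ksubsets_iff by auto
qed

lemma feasible_arrays_subset_PiE:
  "feasible_arrays m \<subseteq> PiE_dflt {1..2*m+1} (\<lambda>_. 0) (row_set m)"
proof
  fix e assume "e \<in> feasible_arrays m"
  hence out: "\<And>r j. r \<notin> {1..2*m+1} \<or> j \<notin> {1..2*m+1} \<Longrightarrow> e r j = 0" and feas: "feasible m e"
    by (auto simp: feasible_arrays_def)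
  have "e r \<in> row_set m r" if r: "r \<in> {1..2*m+1}" for r
    unfolding row_set_iff[OF r]
  proof (intro conjI allI impI)
    show "e r j \<in> {0,1}" for j
      using feas out r unfolding feasible_def by (cases "j \<in> {1..2*m+1}") auto
    show "e r j = 0" if "j \<notin> {1..2*m+1}" for j using out that by simp
    show "sum (e r) {1..2*m+1} \<in> {m, m+1}" if "r \<in> {m, m+1}"
      using feas that unfolding feasible_def by blast
    show "sum (e r) {1..2*m+1} = r" if "r \<notin> {m, m+1}"
      using feas that r unfolding feasible_def by blast
  qed
  moreover have "e r = (\<lambda>_. 0)" if "r \<notin> {1..2*m+1}" for r
    using out that by auto
  ultimately show "e \<in> PiE_dflt {1..2*m+1} (\<lambda>_. 0) (row_set m)"
    by (auto simp: PiE_dflt_def)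
qed

lemma PiE_subset_feasible_arrays:
  "PiE_dflt {1..2*m+1} (\<lambda>_. 0) (row_set m) \<subseteq> feasible_arrays m"
proof
  fix e assume "e \<in> PiE_dflt {1..2*m+1} (\<lambda>_. 0) (row_set m)"
  hence out: "\<And>r. r \<notin> {1..2*m+1} \<Longrightarrow> e r = (\<lambda>_. 0)"
    and row: "\<And>r. r \<in> {1..2*m+1} \<Longrightarrow> e r \<in> row_set m r"
    by (auto simp: PiE_dflt_def)
  have zero: "e r j = 0" if "r \<notin> {1..2*m+1} \<or> j \<notin> {1..2*m+1}" for r j
  proof (cases "r \<in> {1..2*m+1}")
    case True thus ?thesis using that row[OF True] unfolding row_set_iff[OF True] by simp
  next
    case False thus ?thesis using out by simp
  qed
  have "feasible m e" unfolding feasible_def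
  proof (intro conjI ballI)
    show "e r j \<in> {0,1}" if "r \<in> {1..2*m+1}" for r j
      using row[OF that] unfolding row_set_iff[OF that] by simp
    show "(\<Sum>j = 1..2*m+1. e r j) = r" if "r \<in> {1..2*m+1} - {m, m+1}" for r
      using that row[of r] row_set_iff[of r m] by simp
    show "(\<Sum>j = 1..2*m+1. e r j) \<in> {m, m+1}" if r: "r \<in> {m, m+1}" for r
    proof (cases "r \<in> {1..2*m+1}")
      case True thus ?thesis using r row[OF True] unfolding row_set_iff[OF True] by simp
    next
      case False thus ?thesis using r out[OF False] by auto
    qed
  qed
  thus "e \<in> feasible_arrays m" using zero by (simp add: feasible_arrays_def)
qed

lemma feasible_arrays_PiE: "feasible_arrays m = PiE_dflt {1..2*m+1} (\<lambda>_. 0) (row_set m)"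
  using feasible_arrays_subset_PiE PiE_subset_feasible_arrays by (rule equalityI)

lemma finite_feasible_arrays: "finite (feasible_arrays m)"
  unfolding feasible_arrays_PiE by (rule finite_PiE_dflt) (auto simp: row_set_def)

lemma feasible_arrays_nonempty: "feasible_arrays m \<noteq> {}"
proof -
  have "row_set m r \<noteq> {}" if "r \<in> {1..2*m+1}" for r
    using ksubsets_nonempty[of r "2*m+1"] ksubsets_nonempty[of m "2*m+1"] that
    by (auto simp: row_set_def)
  thus ?thesis by (simp add: feasible_arrays_PiE)
qed

theorem V_pmf_uniform:
  assumes m: "m \<ge> 1"
  shows "V_pmf m = pmf_of_set (feasible_arrays m)"
proof -
  let ?n = "2*m+1"
  have padded: "X r = (\<lambda>_. 0)" if "X \<in> set_pmf (X_pmf ?n)" "r \<notin> {1..?n}" for X r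
    using that set_Pi_pmf_subset[of "{1..?n}" "\<lambda>_. 0" "\<lambda>r. pmf_of_set (row_of ` ksubsets ?n r)"]
    unfolding X_pmf_rows by auto
  have "V_pmf m = bind_pmf (X_pmf ?n) (\<lambda>X. Pi_pmf {1..?n} (\<lambda>_. 0) (\<lambda>r. resample_row m r (X r)))"
    unfolding V_pmf_def by (intro bind_pmf_cong refl resample_rows[symmetric] m) (rule padded)
  also have "\<dots> = Pi_pmf {1..?n} (\<lambda>_. 0)
                    (\<lambda>r. bind_pmf (pmf_of_set (row_of ` ksubsets ?n r)) (resample_row m r))"
    unfolding X_pmf_rows by (rule Pi_pmf_bind[symmetric]) simp
  also have "\<dots> = Pi_pmf {1..?n} (\<lambda>_. 0) (\<lambda>r. pmf_of_set (row_set m r))"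
    by (intro Pi_pmf_cong refl resample_uniform_row)
  also have "\<dots> = pmf_of_set (feasible_arrays m)"
    unfolding feasible_arrays_PiE
  proof (rule Pi_pmf_of_set)
    fix r assume "r \<in> {1..?n}"
    thus "finite (row_set m r)" "row_set m r \<noteq> {}"
      using ksubsets_nonempty[of m ?n] ksubsets_nonempty[of r ?n] by (auto simp: row_set_def)
  qed simp
  finally show ?thesis .
qed

lemma feasible_arrays_01: "e \<in> feasible_arrays m \<Longrightarrow> e r j \<in> {0,1}"
  unfolding feasible_arrays_def feasible_def
  by (cases "r \<in> {1..2*m+1} \<and> j \<in> {1..2*m+1}") auto

lemma feasible_arrays_zero:
  "e \<in> feasible_arrays m \<Longrightarrow> r \<notin> {1..2*m+1} \<or> j \<notin> {1..2*m+1} \<Longrightarrow> e r j = 0"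
  unfolding feasible_arrays_def by blast

lemma feasible_arrays_upd_middle_row_iff:
  assumes e: "e \<in> feasible_arrays m" and M: "M \<in> {m, m+1}" and m: "m \<ge> 1"
  shows "e(M := u) \<in> feasible_arrays m \<longleftrightarrow>
           (\<exists>S. u = row_of S \<and> S \<subseteq> {1..2*m+1} \<and> card S \<in> {m, m+1})"
proof -
  have "M \<in> {1..2*m+1}" using M m by auto
  hence "e(M := u) \<in> feasible_arrays m \<longleftrightarrow> u \<in> row_set m M"
    using e unfolding feasible_arrays_PiE PiE_dflt_def by auto
  also have "\<dots> \<longleftrightarrow> (\<exists>S. u = row_of S \<and> S \<subseteq> {1..2*m+1} \<and> card S \<in> {m, m+1})"
    using M by (auto simp: row_set_def ksubsets_def)
  finally show ?thesis .
qed

definition row_ones :: "nat \<Rightarrow> arr \<Rightarrow> nat \<Rightarrow> nat set" where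
  "row_ones m e M = {j \<in> {1..2*m+1}. e M j = 1}"

lemma row_ones_subset: "row_ones m e M \<subseteq> {1..2*m+1}"
  by (auto simp: row_ones_def)

lemma finite_row_ones [simp]: "finite (row_ones m e M)"
  by (rule finite_subset[OF row_ones_subset]) simp

lemma row_eq_row_of_ones: "e \<in> feasible_arrays m \<Longrightarrow> e M = row_of (row_ones m e M)"
  using feasible_arrays_01[of e m M] feasible_arrays_zero[of e m M]
  by (force simp: row_of_def row_ones_def)

lemma card_row_ones_middle:
  assumes e: "e \<in> feasible_arrays m" and M: "M \<in> {m, m+1}" and m: "m \<ge> 1"
  shows "card (row_ones m e M) \<in> {m, m+1}"
proof -
  have "e(M := e M) \<in> feasible_arrays m" using e by simp
  then obtain S where "e M = row_of S" "card S \<in> {m, m+1}"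
    unfolding feasible_arrays_upd_middle_row_iff[OF e M m] by blast
  moreover have "row_of (row_ones m e M) = row_of S"
    using row_eq_row_of_ones[OF e, of M] \<open>e M = row_of S\<close> by simp
  ultimately show ?thesis by simp
qed

lemma bulb_01: "bulb m e k \<in> {0,1}"
  unfolding bulb_def by auto

lemma bulb_le_1: "bulb m e k \<le> 1"
  unfolding bulb_def by simp

lemma bulb_neq_1_iff: "bulb m e k \<noteq> 1 \<longleftrightarrow> bulb m e k = 0"
  using bulb_01[of m e k] by auto

lemma parity_change_summand:
  fixes a b x :: nat
  assumes "a \<in> {0,1}" "b \<in> {0,1}"
  shows "(a + x) mod 2 = (if a = b then (b + x) mod 2 else 1 - (b + x) mod 2)"
  using assms by (elim insertE emptyE; simp; presburger)

lemma bulb_upd_row: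
  assumes M: "M \<in> {1..2*m+1}" and "u k \<in> {0,1}" "e M k \<in> {0,1}"
  shows "bulb m (e(M := u)) k = (if u k = e M k then bulb m e k else 1 - bulb m e k)"
proof -
  define x where "x = (\<Sum>r\<in>{1..2*m+1} - {M}. e r k)"
  have "(\<Sum>r=1..2*m+1. (e(M := u)) r k) = u k + x"
    unfolding x_def using M by (subst sum.remove[of _ M]) (auto intro!: sum.cong)
  moreover have "(\<Sum>r=1..2*m+1. e r k) = e M k + x"
    unfolding x_def using M by (subst sum.remove[of _ M]) auto
  ultimately show ?thesis
    unfolding bulb_def using parity_change_summand[OF assms(2,3)] by simp
qed

lemma Vtot_toggle:
  assumes T: "T \<subseteq> {1..2*m+1}"
    and b: "\<And>k. k \<in> {1..2*m+1} \<Longrightarrow> bulb m e' k = (if k \<in> T then 1 - bulb m e k else bulb m e k)"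
  shows "int (Vtot m e') = int (Vtot m e) + (\<Sum>k\<in>T. 1 - 2 * int (bulb m e k))"
proof -
  have "int (Vtot m e') = (\<Sum>k=1..2*m+1. int (bulb m e k) + (if k \<in> T then 1 - 2 * int (bulb m e k) else 0))"
    unfolding Vtot_def of_nat_sum by (intro sum.cong refl) (use b bulb_le_1 in \<open>auto simp: of_nat_diff\<close>)
  also have "\<dots> = int (Vtot m e) + (\<Sum>k=1..2*m+1. if k \<in> T then 1 - 2 * int (bulb m e k) else 0)"
    by (simp add: sum.distrib Vtot_def)
  also have "(\<Sum>k=1..2*m+1. if k \<in> T then 1 - 2 * int (bulb m e k) else 0)
           = (\<Sum>k\<in>T. 1 - 2 * int (bulb m e k))"
    by (simp only: sum.inter_restrict[OF finite_atLeastAtMost, symmetric] Int_absorb1[OF T])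
  finally show ?thesis .
qed

lemma bulb_flip:
  assumes e: "e \<in> feasible_arrays m" and M: "M \<in> {1..2*m+1}"
  shows "bulb m (flip e M i) k = (if k = i then 1 - bulb m e k else bulb m e k)"
proof -
  have "((e M)(i := 1 - e M i)) k = e M k \<longleftrightarrow> k \<noteq> i"
    using feasible_arrays_01[OF e, of M i] by auto
  moreover have "((e M)(i := 1 - e M i)) k \<in> {0,1}"
    using feasible_arrays_01[OF e, of M] by auto
  ultimately show ?thesis
    unfolding flip_def upd_entry_def
    using bulb_upd_row[of M m "(e M)(i := 1 - e M i)" k e] M feasible_arrays_01[OF e, of M k] by auto
qed

lemma bulb_swap:
  assumes e: "e \<in> feasible_arrays m" and M: "M \<in> {1..2*m+1}" and d: "e M i \<noteq> e M j"
  shows "bulb m (swap e M i j) k = (if k = i \<or> k = j then 1 - bulb m e k else bulb m e k)"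
proof -
  have "((e M)(i := e M j, j := e M i)) k = e M k \<longleftrightarrow> \<not> (k = i \<or> k = j)"
    using d by auto
  moreover have "((e M)(i := e M j, j := e M i)) k \<in> {0,1}"
    using feasible_arrays_01[OF e, of M] by auto
  ultimately show ?thesis
    unfolding swap_def
    using bulb_upd_row[of M m "(e M)(i := e M j, j := e M i)" k e] M feasible_arrays_01[OF e, of M k]
    by auto
qed

lemma Vtot_flip:
  assumes e: "e \<in> feasible_arrays m" and M: "M \<in> {1..2*m+1}" and i: "i \<in> {1..2*m+1}"
  shows "int (Vtot m (flip e M i)) = int (Vtot m e) + 1 - 2 * int (bulb m e i)"
  using Vtot_toggle[of "{i}" m "flip e M i" e] i bulb_flip[OF e M] by auto

lemma Vtot_swap:
  assumes e: "e \<in> feasible_arrays m" and M: "M \<in> {1..2*m+1}"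
    and i: "i \<in> {1..2*m+1}" and j: "j \<in> {1..2*m+1}" and d: "e M i \<noteq> e M j"
  shows "int (Vtot m (swap e M i j))
         = int (Vtot m e) + (1 - 2 * int (bulb m e i)) + (1 - 2 * int (bulb m e j))"
proof -
  have "i \<noteq> j" using d by auto
  moreover have "int (Vtot m (swap e M i j)) = int (Vtot m e) + (\<Sum>k\<in>{i,j}. 1 - 2 * int (bulb m e k))"
    using i j by (intro Vtot_toggle) (auto simp: bulb_swap[OF e M d])
  ultimately show ?thesis by simp
qed

definition partners :: "nat \<Rightarrow> nat \<Rightarrow> arr \<Rightarrow> nat \<Rightarrow> nat set" where
  "partners m i e M = {j \<in> {1..2*m+1}. e M j \<noteq> e M i}"

lemma partners_eq:
  assumes e: "e \<in> feasible_arrays m" and i: "i \<in> {1..2*m+1}"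
  shows "partners m i e M
         = (if i \<in> row_ones m e M then {1..2*m+1} - row_ones m e M else row_ones m e M)"
  using row_eq_row_of_ones[OF e, of M] row_ones_subset[of m e M] i
  by (auto simp: partners_def row_of_def)

lemma card_partners:
  assumes e: "e \<in> feasible_arrays m" and i: "i \<in> {1..2*m+1}"
  shows "card (partners m i e M)
         = (if i \<in> row_ones m e M then 2*m+1 - card (row_ones m e M) else card (row_ones m e M))"
  unfolding partners_eq[OF e i] using row_ones_subset[of m e M] by (simp add: card_Diff_subset)

lemma card_partners_middle:
  assumes e: "e \<in> feasible_arrays m" and M: "M \<in> {m, m+1}" and m: "m \<ge> 1" and i: "i \<in> {1..2*m+1}"
  shows "card (partners m i e M) \<in> {m, m+1}"
  using card_partners[OF e i, of M] card_row_ones_middle[OF e M m] by auto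

lemma partners_nonempty:
  assumes e: "e \<in> feasible_arrays m" and M: "M \<in> {m, m+1}" and m: "m \<ge> 1" and i: "i \<in> {1..2*m+1}"
  shows "partners m i e M \<noteq> {}"
  using card_partners_middle[OF assms] m by auto

lemma finite_partners [simp]: "finite (partners m i e M)"
  by (simp add: partners_def)

lemma flip_in_feasible_arrays_iff:
  assumes e: "e \<in> feasible_arrays m" and M: "M \<in> {1..2*m+1}" and i: "i \<in> {1..2*m+1}"
  shows "flip e M i \<in> feasible_arrays m \<longleftrightarrow> feasible m (flip e M i)"
  using feasible_arrays_zero[OF e] M i
  by (auto simp: feasible_arrays_def flip_def upd_entry_def)

text \<open>If entry (M, i) is 1, flipping it is feasible iff the row has m+1 ones, i.e. m zeros;
  if it is 0, iff the row has m ones. Either way: m partners.\<close>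
lemma feasible_flip_iff:
  assumes e: "e \<in> feasible_arrays m" and M: "M \<in> {m, m+1}" and m: "m \<ge> 1" and i: "i \<in> {1..2*m+1}"
  shows "feasible m (flip e M i) \<longleftrightarrow> card (partners m i e M) = m"
proof -
  define S where "S = row_ones m e M"
  define S' where "S' = (if i \<in> S then S - {i} else insert i S)"
  have S: "finite S" "S \<subseteq> {1..2*m+1}" "card S \<in> {m, m+1}"
    unfolding S_def using row_ones_subset card_row_ones_middle[OF e M m] by auto
  have fl: "flip e M i = e(M := row_of S')"
    unfolding flip_def upd_entry_def S'_def row_eq_row_of_ones[OF e, of M, folded S_def]
    by (auto simp: row_of_def fun_eq_iff)
  have "M \<in> {1..2*m+1}" using M m by auto
  hence "feasible m (flip e M i) \<longleftrightarrow> flip e M i \<in> feasible_arrays m"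
    using flip_in_feasible_arrays_iff[OF e _ i] by blast
  also have "\<dots> \<longleftrightarrow> (\<exists>T. row_of S' = row_of T \<and> T \<subseteq> {1..2*m+1} \<and> card T \<in> {m, m+1})"
    unfolding fl by (rule feasible_arrays_upd_middle_row_iff[OF e M m])
  also have "\<dots> \<longleftrightarrow> card S' \<in> {m, m+1}"
  proof -
    have "S' \<subseteq> {1..2*m+1}" using S i by (auto simp: S'_def)
    thus ?thesis by auto
  qed
  also have "\<dots> \<longleftrightarrow> card (partners m i e M) = m"
  proof -
    have "card (partners m i e M) = (if i \<in> S then 2*m+1 - card S else card S)"
      using card_partners[OF e i, of M] by (simp add: S_def)
    moreover have "card S' = (if i \<in> S then card S - 1 else card S + 1)"
      using S by (simp add: S'_def card_insert_if)
    ultimately show ?thesis using S(3) m by auto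
  qed
  finally show ?thesis .
qed

lemma swap_partner:
  assumes e: "e \<in> feasible_arrays m" and M: "M \<in> {m, m+1}" and m: "m \<ge> 1"
    and i: "i \<in> {1..2*m+1}" and J: "J \<in> partners m i e M"
  shows "swap e M i J \<in> feasible_arrays m"
    and "i \<in> row_ones m (swap e M i J) M \<longleftrightarrow> i \<notin> row_ones m e M"
    and "card (row_ones m (swap e M i J) M) = card (row_ones m e M)"
proof -
  define S where "S = row_ones m e M"
  define S' where "S' = (if i \<in> S then insert J (S - {i}) else insert i (S - {J}))"
  have S: "finite S" "S \<subseteq> {1..2*m+1}" "card S \<in> {m, m+1}"
    unfolding S_def using row_ones_subset card_row_ones_middle[OF e M m] by auto
  have eM: "e M = row_of S" unfolding S_def by (rule row_eq_row_of_ones[OF e])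
  have Jr: "J \<in> {1..2*m+1}" and "row_of S J \<noteq> row_of S i"
    using J eM by (auto simp: partners_def)
  hence iJ: "i \<in> S \<longleftrightarrow> J \<notin> S" by (auto simp: row_of_def split: if_splits)
  have sw: "swap e M i J = e(M := row_of S')"
    unfolding swap_def eM S'_def using iJ by (auto simp: row_of_def fun_eq_iff)
  have S'r: "S' \<subseteq> {1..2*m+1}" using S i Jr by (auto simp: S'_def)
  have "card S > 0" using S(1) iJ card_gt_0_iff by blast
  hence cS': "card S' = card S"
    using S iJ by (auto simp: S'_def card_insert_if)
  show "swap e M i J \<in> feasible_arrays m"
    unfolding sw feasible_arrays_upd_middle_row_iff[OF e M m] using S'r cS' S by auto
  have ones: "row_ones m (swap e M i J) M = S'"
    using S'r unfolding sw by (auto simp: row_ones_def row_of_def)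
  show "i \<in> row_ones m (swap e M i J) M \<longleftrightarrow> i \<notin> row_ones m e M"
    unfolding ones S_def[symmetric] S'_def using iJ by auto
  show "card (row_ones m (swap e M i J) M) = card (row_ones m e M)"
    unfolding ones cS' S_def ..
qed

lemma card_partners_swap:
  assumes e: "e \<in> feasible_arrays m" and M: "M \<in> {m, m+1}" and m: "m \<ge> 1"
    and i: "i \<in> {1..2*m+1}" and J: "J \<in> partners m i e M"
  shows "card (partners m i (swap e M i J) M) = 2*m+1 - card (partners m i e M)"
  using card_partners[OF swap_partner(1)[OF assms] i, of M] card_partners[OF e i, of M]
    swap_partner(2,3)[OF assms] card_row_ones_middle[OF e M m] by auto

lemma partner_swap_iff:
  "J \<in> {1..2*m+1} \<Longrightarrow> J \<in> partners m i (swap e M i J) M \<longleftrightarrow> J \<in> partners m i e M"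
  by (auto simp: partners_def swap_def)

lemma swap_swap: "swap (swap e r i j) r i j = e"
  by (auto simp: swap_def fun_eq_iff)

lemma flip_flip: "e r i \<le> 1 \<Longrightarrow> flip (flip e r i) r i = e"
  by (auto simp: flip_def upd_entry_def fun_eq_iff)

text \<open>Complementing row m keeps its sum in {m, m+1} and toggles every bulb, which shows that
  exactly half of the feasible arrays have a given bulb on.\<close>
definition complement_row :: "nat \<Rightarrow> arr \<Rightarrow> arr" where
  "complement_row m e = e(m := (\<lambda>j. if j \<in> {1..2*m+1} then 1 - e m j else 0))"

lemma complement_row_feasible:
  assumes m: "m \<ge> 1" and e: "e \<in> feasible_arrays m"
  shows "complement_row m e \<in> feasible_arrays m"
proof -
  define S where "S = row_ones m e m"
  have "card S \<in> {m, m+1}" unfolding S_def by (rule card_row_ones_middle[OF e _ m]) simp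
  moreover have "card ({1..2*m+1} - S) = 2*m+1 - card S"
    using row_ones_subset[of m e m] by (simp add: card_Diff_subset S_def)
  moreover have "(\<lambda>j. if j \<in> {1..2*m+1} then 1 - e m j else 0) = row_of ({1..2*m+1} - S)"
    using feasible_arrays_01[OF e, of m] by (force simp: row_of_def row_ones_def S_def fun_eq_iff)
  ultimately show ?thesis
    unfolding complement_row_def feasible_arrays_upd_middle_row_iff[OF e insertI1 m]
    by (intro exI[of _ "{1..2*m+1} - S"]) auto
qed

lemma complement_row_complement_row:
  assumes e: "e \<in> feasible_arrays m"
  shows "complement_row m (complement_row m e) = e"
proof -
  have "(\<lambda>j. if j \<in> {1..2*m+1} then 1 - (if j \<in> {1..2*m+1} then 1 - e m j else 0) else 0) = e m"
  proof
    fix j show "(if j \<in> {1..2*m+1} then 1 - (if j \<in> {1..2*m+1} then 1 - e m j else 0) else 0) = e m j"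
      using feasible_arrays_01[OF e, of m j] feasible_arrays_zero[OF e, of m j] by auto
  qed
  thus ?thesis by (simp only: complement_row_def fun_upd_upd fun_upd_same fun_upd_triv)
qed

lemma bulb_complement_row:
  assumes e: "e \<in> feasible_arrays m" and k: "k \<in> {1..2*m+1}" and m: "m \<ge> 1"
  shows "bulb m (complement_row m e) k = 1 - bulb m e k"
  unfolding complement_row_def using feasible_arrays_01[OF e, of m k] k m
  by (subst bulb_upd_row) auto

lemma card_bulb_on:
  assumes m: "m \<ge> 1" and i: "i \<in> {1..2*m+1}"
  shows "card (feasible_arrays m) = 2 * card {e \<in> feasible_arrays m. bulb m e i = 1}"
proof -
  let ?on = "{e \<in> feasible_arrays m. bulb m e i = 1}"
  let ?off = "{e \<in> feasible_arrays m. bulb m e i = 0}"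
  have "bij_betw (complement_row m) ?on ?off"
    by (rule bij_betw_byWitness[where f' = "complement_row m"])
       (auto simp: complement_row_complement_row complement_row_feasible[OF m]
                   bulb_complement_row[OF _ i m])
  hence "card ?on = card ?off" by (rule bij_betw_same_card)
  moreover have "feasible_arrays m = ?on \<union> ?off" using bulb_neq_1_iff[of m _ i] by blast
  moreover have "?on \<inter> ?off = {}" by auto
  ultimately show ?thesis
    using finite_feasible_arrays[of m] card_Un_disjoint[of ?on ?off] by simp
qed

lemma bulb_on_nonempty:
  assumes m: "m \<ge> 1" and i: "i \<in> {1..2*m+1}"
  shows "{e \<in> feasible_arrays m. bulb m e i = 1} \<noteq> {}"
proof
  assume off: "{e \<in> feasible_arrays m. bulb m e i = 1} = {}"
  have "card (feasible_arrays m) = 2 * card {e \<in> feasible_arrays m. bulb m e i = 1}"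
    by (rule card_bulb_on[OF m i])
  also have "\<dots> = 0" unfolding off by simp
  finally show False using finite_feasible_arrays[of m] feasible_arrays_nonempty[of m] by simp
qed

lemma cond_pmf_of_set:
  assumes "finite A" "A \<inter> B \<noteq> {}"
  shows "cond_pmf (pmf_of_set A) B = pmf_of_set (A \<inter> B)"
proof (rule pmf_eqI)
  fix x
  have ne: "A \<noteq> {}" using assms(2) by auto
  hence "set_pmf (pmf_of_set A) \<inter> B \<noteq> {}" using assms by simp
  moreover have "card A > 0" "card (A \<inter> B) > 0" using assms ne by (simp_all add: card_gt_0_iff)
  ultimately show "pmf (cond_pmf (pmf_of_set A) B) x = pmf (pmf_of_set (A \<inter> B)) x"
    using assms ne by (auto simp: pmf_cond measure_pmf_of_set indicator_def)
qed

lemma cond_V_pmf_bulb_on: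
  assumes m: "m \<ge> 1" and i: "i \<in> {1..2*m+1}"
  shows "cond_pmf (V_pmf m) {e. bulb m e i = 1} = pmf_of_set {e \<in> feasible_arrays m. bulb m e i = 1}"
  unfolding V_pmf_uniform[OF m] using finite_feasible_arrays bulb_on_nonempty[OF m i]
  by (subst cond_pmf_of_set) (auto simp: Int_def)

definition flip_prob :: "nat \<Rightarrow> nat \<Rightarrow> arr \<Rightarrow> nat \<Rightarrow> real" where
  "flip_prob m i e M = (if feasible m (flip e M i) then 1 / real (m+1) else 0)"

lemma flip_prob_eq:
  assumes e: "e \<in> feasible_arrays m" and M: "M \<in> {m, m+1}" and m: "m \<ge> 1" and i: "i \<in> {1..2*m+1}"
  shows "flip_prob m i e M = of_bool (card (partners m i e M) = m) / real (m+1)"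
  by (simp add: flip_prob_def feasible_flip_iff[OF assms])

definition step_kernel :: "nat \<Rightarrow> nat \<Rightarrow> arr \<Rightarrow> arr pmf" where
  "step_kernel m i e = do {
     M \<leftarrow> pmf_of_set {m, m+1};
     F \<leftarrow> bernoulli_pmf (flip_prob m i e M);
     J \<leftarrow> pmf_of_set (partners m i e M);
     return_pmf (if F then flip e M i else swap e M i J)
   }"

definition step_weight :: "nat \<Rightarrow> nat \<Rightarrow> arr \<Rightarrow> nat \<Rightarrow> arr \<Rightarrow> real" where
  "step_weight m i e M w = flip_prob m i e M * of_bool (flip e M i = w)
     + (1 - flip_prob m i e M) * (\<Sum>J\<in>partners m i e M. of_bool (swap e M i J = w))
       / card (partners m i e M)"

lemma pmf_step_kernel:
  assumes m: "m \<ge> 1" and i: "i \<in> {1..2*m+1}" and e: "e \<in> feasible_arrays m"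
  shows "pmf (step_kernel m i e) w = (step_weight m i e m w + step_weight m i e (m+1) w) / 2"
proof -
  have "pmf (bind_pmf (bernoulli_pmf (flip_prob m i e M)) (\<lambda>F. bind_pmf (pmf_of_set (partners m i e M))
          (\<lambda>J. return_pmf (if F then flip e M i else swap e M i J)))) w = step_weight m i e M w"
    if M: "M \<in> {m, m+1}" for M
  proof -
    have p: "0 \<le> flip_prob m i e M" "flip_prob m i e M \<le> 1" by (auto simp: flip_prob_def)
    show ?thesis
      unfolding pmf_bind_bernoulli[OF p] step_weight_def using partners_nonempty[OF e M m i]
      by (simp add: pmf_bind_pmf_of_set pmf_return indicator_def of_bool_def eq_commute)
  qed
  thus ?thesis unfolding step_kernel_def by (subst pmf_bind_pmf_of_set) auto
qed

lemma sum_flip_preimage: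
  fixes c :: "arr \<Rightarrow> real"
  assumes w: "w \<in> feasible_arrays m" "bulb m w i = 1" and M: "M \<in> {1..2*m+1}"
  shows "(\<Sum>e\<in>{e \<in> feasible_arrays m. bulb m e i = 0}. c e * of_bool (flip e M i = w))
         = of_bool (flip w M i \<in> feasible_arrays m) * c (flip w M i)"
proof -
  let ?off = "{e \<in> feasible_arrays m. bulb m e i = 0}"
  have "flip e M i = w \<longleftrightarrow> e = flip w M i" if "e \<in> feasible_arrays m" for e
    using flip_flip[of e M i] flip_flip[of w M i] feasible_arrays_01[OF that, of M i]
      feasible_arrays_01[OF w(1), of M i] by auto
  hence "(\<Sum>e\<in>?off. c e * of_bool (flip e M i = w)) = (\<Sum>e\<in>?off. if e = flip w M i then c e else 0)"
    by (intro sum.cong refl) auto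
  also have "\<dots> = of_bool (flip w M i \<in> ?off) * c (flip w M i)"
    using finite_feasible_arrays[of m] by (simp add: sum.delta')
  also have "flip w M i \<in> ?off \<longleftrightarrow> flip w M i \<in> feasible_arrays m"
    using bulb_flip[OF w(1) M] w(2) by simp
  finally show ?thesis .
qed

lemma swap_preimage:
  assumes w: "w \<in> feasible_arrays m" "bulb m w i = 1"
    and M: "M \<in> {m, m+1}" and m: "m \<ge> 1" and i: "i \<in> {1..2*m+1}"
  shows "(SIGMA e:{e \<in> feasible_arrays m. bulb m e i = 0}. partners m i e M)
           \<inter> {z. swap (fst z) M i (snd z) = w}
         = (\<lambda>J. (swap w M i J, J)) ` partners m i w M"
proof (intro equalityI subsetI)
  fix z assume "z \<in> (SIGMA e:{e \<in> feasible_arrays m. bulb m e i = 0}. partners m i e M)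
                    \<inter> {z. swap (fst z) M i (snd z) = w}"
  then obtain e J where z: "z = (e, J)" "J \<in> partners m i e M" "swap e M i J = w" by auto
  hence "e = swap w M i J" using swap_swap[of e M i J] by simp
  moreover have "J \<in> partners m i w M"
    using z partner_swap_iff[of J m i e M] by (auto simp: partners_def)
  ultimately show "z \<in> (\<lambda>J. (swap w M i J, J)) ` partners m i w M" using z(1) by auto
next
  fix z assume "z \<in> (\<lambda>J. (swap w M i J, J)) ` partners m i w M"
  then obtain J where z: "z = (swap w M i J, J)" and J: "J \<in> partners m i w M" by auto
  have Mr: "M \<in> {1..2*m+1}" using M m by auto
  have Jr: "J \<in> {1..2*m+1}" and d: "w M i \<noteq> w M J" using J by (auto simp: partners_def)
  have "swap w M i J \<in> {e \<in> feasible_arrays m. bulb m e i = 0}"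
    using swap_partner(1)[OF w(1) M m i J] bulb_swap[OF w(1) Mr d] w(2) by simp
  moreover have "J \<in> partners m i (swap w M i J) M" using J partner_swap_iff[OF Jr] by simp
  ultimately show "z \<in> (SIGMA e:{e \<in> feasible_arrays m. bulb m e i = 0}. partners m i e M)
                    \<inter> {z. swap (fst z) M i (snd z) = w}"
    using z swap_swap by auto
qed

lemma sum_swap_preimage:
  fixes c :: "arr \<Rightarrow> real"
  assumes w: "w \<in> feasible_arrays m" "bulb m w i = 1"
    and M: "M \<in> {m, m+1}" and m: "m \<ge> 1" and i: "i \<in> {1..2*m+1}"
  shows "(\<Sum>e\<in>{e \<in> feasible_arrays m. bulb m e i = 0}.
            c e * (\<Sum>J\<in>partners m i e M. of_bool (swap e M i J = w)))
         = (\<Sum>J\<in>partners m i w M. c (swap w M i J))"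
proof -
  let ?off = "{e \<in> feasible_arrays m. bulb m e i = 0}"
  let ?P = "\<lambda>e. partners m i e M"
  have fin: "finite (Sigma ?off ?P)" using finite_feasible_arrays[of m] by auto
  have "(\<Sum>e\<in>?off. c e * (\<Sum>J\<in>?P e. of_bool (swap e M i J = w)))
        = (\<Sum>(e, J)\<in>Sigma ?off ?P. c e * of_bool (swap e M i J = w))"
    unfolding sum_distrib_left using finite_feasible_arrays[of m] by (intro sum.Sigma) auto
  also have "\<dots> = (\<Sum>z\<in>Sigma ?off ?P \<inter> {z. swap (fst z) M i (snd z) = w}. c (fst z))"
    by (subst sum.inter_restrict[OF fin]) (auto intro!: sum.cong)
  also have "\<dots> = (\<Sum>J\<in>?P w. c (swap w M i J))"
    unfolding swap_preimage[OF assms] by (subst sum.reindex) (auto simp: inj_on_def)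
  finally show ?thesis .
qed

lemma step_balance_arith:
  fixes m a :: nat
  assumes "m \<ge> 1" "a \<in> {m, m+1}"
  shows "of_bool (a = m) / real (m+1)
         + real a * ((1 - of_bool (2*m+1-a = m) / real (m+1)) / real (2*m+1-a)) = 1"
proof -
  have pos: "real m > 0" "real m + 1 > 0" using assms(1) by auto
  hence "real m + real m * real m > 0" by (simp add: add_pos_nonneg)
  note pos = pos this
  from assms(2) consider "a = m" | "a = m+1" by auto
  thus ?thesis
  proof cases
    case 1
    hence "2*m+1-a = m+1" by simp
    thus ?thesis using 1 pos by (simp add: field_simps)
  next
    case 2
    hence "2*m+1-a = m" by simp
    thus ?thesis using 2 pos by (simp add: field_simps)
  qed
qed

text \<open>This balance is what the flip probability 1/(m+1) is chosen for.\<close>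
lemma sum_step_weight_bulb_on:
  assumes m: "m \<ge> 1" and i: "i \<in> {1..2*m+1}" and M: "M \<in> {m, m+1}"
    and w: "w \<in> feasible_arrays m" "bulb m w i = 1"
  shows "(\<Sum>e\<in>{e \<in> feasible_arrays m. bulb m e i = 0}. step_weight m i e M w) = 1"
proof -
  let ?off = "{e \<in> feasible_arrays m. bulb m e i = 0}"
  define a where "a = card (partners m i w M)"
  have Mr: "M \<in> {1..2*m+1}" using M m by auto
  have a: "a \<in> {m, m+1}" unfolding a_def by (rule card_partners_middle[OF w(1) M m i])
  have flip_w: "of_bool (flip w M i \<in> feasible_arrays m) * flip_prob m i (flip w M i) M
                = of_bool (a = m) / real (m+1)"
  proof -
    have "flip (flip w M i) M i = w"
      using flip_flip[of w M i] feasible_arrays_01[OF w(1), of M i] by auto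
    hence "feasible m (flip (flip w M i) M i)" using w(1) by (simp add: feasible_arrays_def)
    thus ?thesis unfolding flip_in_feasible_arrays_iff[OF w(1) Mr i] feasible_flip_iff[OF w(1) M m i] a_def
      by (simp add: flip_prob_def)
  qed
  have swap_w: "(1 - flip_prob m i (swap w M i J) M) / card (partners m i (swap w M i J) M)
                = (1 - of_bool (2*m+1-a = m) / real (m+1)) / real (2*m+1-a)"
    if J: "J \<in> partners m i w M" for J
    using flip_prob_eq[OF swap_partner(1)[OF w(1) M m i J] M m i]
      card_partners_swap[OF w(1) M m i J] by (simp add: a_def)
  have "(\<Sum>e\<in>?off. step_weight m i e M w)
        = (\<Sum>e\<in>?off. flip_prob m i e M * of_bool (flip e M i = w))
          + (\<Sum>e\<in>?off. (1 - flip_prob m i e M) / card (partners m i e M)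
                         * (\<Sum>J\<in>partners m i e M. of_bool (swap e M i J = w)))"
    unfolding step_weight_def sum.distrib[symmetric] by (intro sum.cong refl) simp
  also have "\<dots> = of_bool (a = m) / real (m+1)
      + real a * ((1 - of_bool (2*m+1-a = m) / real (m+1)) / real (2*m+1-a))"
    unfolding sum_flip_preimage[OF w Mr] sum_swap_preimage[OF w M m i] flip_w
    by (simp add: swap_w a_def)
  also have "\<dots> = 1" by (rule step_balance_arith[OF m a])
  finally show ?thesis .
qed

lemma step_weight_bulb_off:
  assumes m: "m \<ge> 1" and i: "i \<in> {1..2*m+1}" and M: "M \<in> {m, m+1}"
    and e: "e \<in> feasible_arrays m" "bulb m e i = 0"
    and w: "\<not> (w \<in> feasible_arrays m \<and> bulb m w i = 1)"
  shows "step_weight m i e M w = 0"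
proof -
  have Mr: "M \<in> {1..2*m+1}" using M m by auto
  have "flip_prob m i e M * of_bool (flip e M i = w) = 0"
  proof (cases "feasible m (flip e M i)")
    case True
    hence "flip e M i \<in> feasible_arrays m" using flip_in_feasible_arrays_iff[OF e(1) Mr i] by simp
    moreover have "bulb m (flip e M i) i = 1" using bulb_flip[OF e(1) Mr] e(2) by simp
    ultimately show ?thesis using w by auto
  qed (simp add: flip_prob_def)
  moreover have "(\<Sum>J\<in>partners m i e M. of_bool (swap e M i J = w)) = (0::real)"
  proof (intro sum.neutral ballI)
    fix J assume J: "J \<in> partners m i e M"
    hence "e M i \<noteq> e M J" by (auto simp: partners_def)
    hence "bulb m (swap e M i J) i = 1" using bulb_swap[OF e(1) Mr] e(2) by simp
    thus "of_bool (swap e M i J = w) = (0::real)" using swap_partner(1)[OF e(1) M m i J] w by auto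
  qed
  ultimately show ?thesis unfolding step_weight_def by simp
qed

lemma map_joint_Vi:
  assumes m: "m \<ge> 1"
  shows "map_pmf (\<lambda>(V, M, F, J). Vi m V M F J i) (joint m i)
         = bind_pmf (pmf_of_set (feasible_arrays m))
             (\<lambda>e. if bulb m e i = 1 then return_pmf e else step_kernel m i e)"
  unfolding joint_def V_pmf_uniform[OF m]
  by (auto simp: map_bind_pmf Vi_def step_kernel_def flip_prob_def partners_def intro!: bind_pmf_cong)

lemma sum_pmf_step_kernel:
  assumes m: "m \<ge> 1" and i: "i \<in> {1..2*m+1}"
  shows "(\<Sum>e\<in>{e \<in> feasible_arrays m. bulb m e i = 0}. pmf (step_kernel m i e) w)
         = of_bool (w \<in> feasible_arrays m \<and> bulb m w i = 1)"
proof -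
  let ?off = "{e \<in> feasible_arrays m. bulb m e i = 0}"
  have "(\<Sum>e\<in>?off. pmf (step_kernel m i e) w)
        = ((\<Sum>e\<in>?off. step_weight m i e m w) + (\<Sum>e\<in>?off. step_weight m i e (m+1) w)) / 2"
    by (simp add: pmf_step_kernel[OF m i] sum.distrib sum_divide_distrib[symmetric])
  also have "\<dots> = of_bool (w \<in> feasible_arrays m \<and> bulb m w i = 1)"
  proof (cases "w \<in> feasible_arrays m \<and> bulb m w i = 1")
    case True
    thus ?thesis using sum_step_weight_bulb_on[OF m i, of _ w] by simp
  next
    case False
    hence "(\<Sum>e\<in>?off. step_weight m i e M w) = 0" if "M \<in> {m, m+1}" for M
      by (intro sum.neutral ballI step_weight_bulb_off[OF m i that]) auto
    thus ?thesis using False by simp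
  qed
  finally show ?thesis .
qed

theorem law_Vi:
  assumes m: "m \<ge> 1" and i: "i \<in> {1..2*m+1}"
  shows "map_pmf (\<lambda>(V, M, F, J). Vi m V M F J i) (joint m i) = cond_pmf (V_pmf m) {V. bulb m V i = 1}"
  unfolding cond_V_pmf_bulb_on[OF m i] map_joint_Vi[OF m]
proof (rule pmf_eqI)
  fix w
  let ?A = "feasible_arrays m"
  let ?on = "{e \<in> ?A. bulb m e i = 1}"
  let ?off = "{e \<in> ?A. bulb m e i = 0}"
  have fin: "finite ?A" and ne: "?A \<noteq> {}" by (rule finite_feasible_arrays, rule feasible_arrays_nonempty)
  have split: "?A = ?on \<union> ?off" "?on \<inter> ?off = {}" using bulb_neq_1_iff[of m _ i] by blast+
  have "(\<Sum>e\<in>?A. pmf (if bulb m e i = 1 then return_pmf e else step_kernel m i e) w)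
        = (\<Sum>e\<in>?on. pmf (return_pmf e) w) + (\<Sum>e\<in>?off. pmf (step_kernel m i e) w)"
    using fin by (subst split(1), subst sum.union_disjoint) (auto intro!: sum.cong arg_cong2[where f="(+)"])
  also have "\<dots> = 2 * of_bool (w \<in> ?on)"
    using fin by (simp add: sum_pmf_step_kernel[OF m i] pmf_return indicator_def sum.delta' of_bool_def)
  finally have "pmf (bind_pmf (pmf_of_set ?A)
          (\<lambda>e. if bulb m e i = 1 then return_pmf e else step_kernel m i e)) w
        = 2 * of_bool (w \<in> ?on) / card ?A"
    by (simp add: pmf_bind_pmf_of_set[OF ne fin])
  also have "\<dots> = pmf (pmf_of_set ?on) w"
    using card_bulb_on[OF m i] bulb_on_nonempty[OF m i] fin by (auto simp: indicator_def)
  finally show "pmf (bind_pmf (pmf_of_set ?A)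
          (\<lambda>e. if bulb m e i = 1 then return_pmf e else step_kernel m i e)) w = pmf (pmf_of_set ?on) w" .
qed

lemma set_pmf_joint:
  assumes m: "m \<ge> 1" and i: "i \<in> {1..2*m+1}" and x: "x \<in> set_pmf (joint m i)"
  obtains V M F J where "x = (V, M, F, J)" "V \<in> feasible_arrays m" "M \<in> {m, m+1}"
    "J \<in> partners m i V M"
proof -
  from x obtain V M F J where V: "V \<in> set_pmf (V_pmf m)" and M: "M \<in> set_pmf (pmf_of_set {m, m+1})"
      and J: "J \<in> set_pmf (pmf_of_set (partners m i V M))" and "x = (V, M, F, J)"
    unfolding joint_def partners_def[symmetric] set_bind_pmf by auto
  moreover have "V \<in> feasible_arrays m"
    using V finite_feasible_arrays feasible_arrays_nonempty by (simp add: V_pmf_uniform[OF m])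
  moreover have "M \<in> {m, m+1}" using M by simp
  moreover have "J \<in> partners m i V M"
    using J partners_nonempty[OF \<open>V \<in> feasible_arrays m\<close> \<open>M \<in> {m, m+1}\<close> m i] by simp
  ultimately show ?thesis using that by blast
qed

lemma Vtot_Vi:
  assumes V: "V \<in> feasible_arrays m" and M: "M \<in> {m, m+1}" and m: "m \<ge> 1"
    and I: "I \<in> {1..2*m+1}" and J: "J \<in> partners m I V M"
  shows "int (Vtot m (Vi m V M F J I)) - int (Vtot m V)
         = of_bool (bulb m V I = 0 \<and> F) + 2 * of_bool (bulb m V I = 0 \<and> bulb m V J = 0 \<and> \<not> F)"
proof -
  have Mr: "M \<in> {1..2*m+1}" using M m by auto
  have Jr: "J \<in> {1..2*m+1}" and d: "V M I \<noteq> V M J" using J by (auto simp: partners_def)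
  show ?thesis
  proof (cases "bulb m V I = 1")
    case True thus ?thesis by (simp add: Vi_def)
  next
    case False
    hence "bulb m V I = 0" using bulb_neq_1_iff by blast
    thus ?thesis
      using Vtot_flip[OF V Mr I] Vtot_swap[OF V Mr I Jr d] bulb_01[of m V J]
      by (auto simp: Vi_def)
  qed
qed

lemma set_pmf_full:
  assumes m: "m \<ge> 1" and x: "x \<in> set_pmf (full m)"
  obtains I V M F J where "x = (I, V, M, F, J)" "I \<in> {1..2*m+1}" "V \<in> feasible_arrays m"
    "M \<in> {m, m+1}" "J \<in> partners m I V M"
proof -
  from x obtain I y where I: "I \<in> {1..2*m+1}" and y: "y \<in> set_pmf (joint m I)"
      and xy: "x = (case y of (V, M, F, J) \<Rightarrow> (I, V, M, F, J))"
    unfolding full_def set_bind_pmf by (auto split: prod.splits)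
  obtain V M F J where "y = (V, M, F, J)" "V \<in> feasible_arrays m" "M \<in> {m, m+1}"
      "J \<in> partners m I V M"
    by (rule set_pmf_joint[OF m I y])
  thus ?thesis using that I xy by simp
qed

lemma real_Vtot: "real (Vtot m e) = (\<Sum>I=1..2*m+1. of_bool (bulb m e I = 1))"
  unfolding Vtot_def of_nat_sum using bulb_neq_1_iff[of m e] by (intro sum.cong refl) simp

lemma sum_Vtot_feasible_arrays:
  assumes m: "m \<ge> 1"
  shows "(\<Sum>e\<in>feasible_arrays m. real (Vtot m e)) = real (2*m+1) * card (feasible_arrays m) / 2"
proof -
  have "(\<Sum>e\<in>feasible_arrays m. real (Vtot m e))
        = (\<Sum>I=1..2*m+1. real (card {e \<in> feasible_arrays m. bulb m e I = 1}))"
    unfolding real_Vtot using finite_feasible_arrays[of m]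
    by (subst sum.swap) (simp add: Int_def)
  also have "\<dots> = (\<Sum>I=1..2*m+1. real (card (feasible_arrays m)) / 2)"
    by (intro sum.cong refl) (simp add: card_bulb_on[OF m])
  finally show ?thesis by simp
qed

lemma full_eq:
  "full m = bind_pmf (pmf_of_set {1..2*m+1})
              (\<lambda>I. map_pmf (\<lambda>(V, M, F, J). (I, V, M, F, J)) (joint m I))"
  unfolding full_def map_pmf_def by (intro bind_pmf_cong refl) (auto split: prod.splits)

lemma map_full_V: "map_pmf (\<lambda>(I, V, M, F, J). V) (full m) = V_pmf m"
proof -
  have "map_pmf (\<lambda>(V, M, F, J). V) (joint m I) = V_pmf m" for I
    unfolding joint_def by (simp add: map_bind_pmf bind_return_pmf')
  thus ?thesis
    unfolding full_eq map_bind_pmf pmf.map_comp by (simp add: o_def case_prod_unfold bind_pmf_const)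
qed

lemma law_Vs:
  assumes m: "m \<ge> 1"
  shows "map_pmf (\<lambda>(I, V, M, F, J). Vi m V M F J I) (full m)
         = bind_pmf (pmf_of_set {1..2*m+1}) (\<lambda>I. pmf_of_set {e \<in> feasible_arrays m. bulb m e I = 1})"
proof -
  have "map_pmf (\<lambda>(I, V, M, F, J). Vi m V M F J I) (full m)
        = bind_pmf (pmf_of_set {1..2*m+1}) (\<lambda>I. map_pmf (\<lambda>(V, M, F, J). Vi m V M F J I) (joint m I))"
    unfolding full_eq map_bind_pmf pmf.map_comp by (simp add: o_def case_prod_unfold)
  also have "\<dots> = bind_pmf (pmf_of_set {1..2*m+1}) (\<lambda>I. pmf_of_set {e \<in> feasible_arrays m. bulb m e I = 1})"
  proof (intro bind_pmf_cong refl)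
    fix I assume "I \<in> set_pmf (pmf_of_set {1..2*m+1})"
    hence I: "I \<in> {1..2*m+1}" by simp
    show "map_pmf (\<lambda>(V, M, F, J). Vi m V M F J I) (joint m I)
          = pmf_of_set {e \<in> feasible_arrays m. bulb m e I = 1}"
      by (simp only: law_Vi[OF m I] cond_V_pmf_bulb_on[OF m I])
  qed
  finally show ?thesis .
qed

lemma set_pmf_law_Vs:
  assumes m: "m \<ge> 1"
  shows "set_pmf (bind_pmf (pmf_of_set {1..2*m+1}) (\<lambda>I. pmf_of_set {e \<in> feasible_arrays m. bulb m e I = 1}))
         \<subseteq> feasible_arrays m"
  using bulb_on_nonempty[OF m] finite_feasible_arrays[of m] by auto

lemma pmf_law_Vs:
  assumes m: "m \<ge> 1" and w: "w \<in> feasible_arrays m"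
  shows "pmf (bind_pmf (pmf_of_set {1..2*m+1}) (\<lambda>I. pmf_of_set {e \<in> feasible_arrays m. bulb m e I = 1})) w
         = 2 * real (Vtot m w) / (real (card (feasible_arrays m)) * real (2*m+1))"
proof -
  let ?N = "real (card (feasible_arrays m))"
  have "pmf (pmf_of_set {e \<in> feasible_arrays m. bulb m e I = 1}) w = of_bool (bulb m w I = 1) * 2 / ?N"
    if I: "I \<in> {1..2*m+1}" for I
    using bulb_on_nonempty[OF m I] card_bulb_on[OF m I] finite_feasible_arrays[of m] w
    by (auto simp: indicator_def)
  hence "pmf (bind_pmf (pmf_of_set {1..2*m+1}) (\<lambda>I. pmf_of_set {e \<in> feasible_arrays m. bulb m e I = 1})) w
         = (\<Sum>I=1..2*m+1. of_bool (bulb m w I = 1) * 2 / ?N) / real (2*m+1)"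
    by (simp add: pmf_bind_pmf_of_set)
  also have "\<dots> = 2 * real (Vtot m w) / (?N * real (2*m+1))"
    by (simp add: real_Vtot sum_divide_distrib[symmetric] sum_distrib_right[symmetric] del: sum_of_bool_eq)
  finally show ?thesis .
qed

theorem size_bias_Vs:
  fixes g :: "real \<Rightarrow> real"
  assumes m: "m \<ge> 1"
  shows "measure_pmf.expectation (full m) (\<lambda>(I, V, M, F, J). real (Vtot m V) * g (real (Vtot m V)))
         = measure_pmf.expectation (full m) (\<lambda>(I, V, M, F, J). real (Vtot m V))
           * measure_pmf.expectation (full m) (\<lambda>(I, V, M, F, J). g (real (Vtot m (Vi m V M F J I))))"
proof -
  let ?A = "feasible_arrays m"
  let ?N = "real (card ?A)"
  let ?n = "real (2*m+1)"
  let ?Vs = "bind_pmf (pmf_of_set {1..2*m+1}) (\<lambda>I. pmf_of_set {e \<in> ?A. bulb m e I = 1})"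
  have N: "?N > 0" using finite_feasible_arrays feasible_arrays_nonempty by (simp add: card_gt_0_iff)
  have E_V: "measure_pmf.expectation (full m) (\<lambda>(I, V, M, F, J). h V) = (\<Sum>e\<in>?A. h e) / ?N"
    for h :: "arr \<Rightarrow> real"
  proof -
    have "measure_pmf.expectation (full m) (\<lambda>(I, V, M, F, J). h V)
          = measure_pmf.expectation (map_pmf (\<lambda>(I, V, M, F, J). V) (full m)) h"
      by (simp add: case_prod_unfold)
    thus ?thesis
      unfolding map_full_V V_pmf_uniform[OF m]
      using finite_feasible_arrays feasible_arrays_nonempty by (simp add: integral_pmf_of_set)
  qed
  have "measure_pmf.expectation (full m) (\<lambda>(I, V, M, F, J). g (real (Vtot m (Vi m V M F J I))))
        = measure_pmf.expectation ?Vs (\<lambda>e. g (real (Vtot m e)))"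
    unfolding law_Vs[OF m, symmetric] by (simp add: case_prod_unfold)
  also have "\<dots> = (\<Sum>e\<in>?A. pmf ?Vs e *\<^sub>R g (real (Vtot m e)))"
    by (rule integral_measure_pmf[OF finite_feasible_arrays]) (use set_pmf_law_Vs[OF m] in blast)
  also have "\<dots> = (\<Sum>e\<in>?A. real (Vtot m e) * g (real (Vtot m e)) * 2 / (?N * ?n))"
  proof (intro sum.cong refl)
    fix e assume "e \<in> ?A"
    show "pmf ?Vs e *\<^sub>R g (real (Vtot m e)) = real (Vtot m e) * g (real (Vtot m e)) * 2 / (?N * ?n)"
      unfolding pmf_law_Vs[OF m \<open>e \<in> ?A\<close>] by simp
  qed
  also have "\<dots> = (\<Sum>e\<in>?A. real (Vtot m e) * g (real (Vtot m e))) * 2 / (?N * ?n)"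
    by (simp add: sum_divide_distrib[symmetric] sum_distrib_right[symmetric])
  finally have E_Vs: "measure_pmf.expectation (full m) (\<lambda>(I, V, M, F, J). g (real (Vtot m (Vi m V M F J I))))
        = (\<Sum>e\<in>?A. real (Vtot m e) * g (real (Vtot m e))) * 2 / (?N * ?n)" .
  have "X / N = n * N / 2 / N * (X * 2 / (N * n))" if "N \<noteq> 0" "n \<noteq> 0" for X N n :: real
    using that by (simp add: field_simps)
  thus ?thesis
    unfolding E_V E_Vs sum_Vtot_feasible_arrays[OF m] using N by simp
qed

theorem Vs_minus_V:
  assumes m: "m \<ge> 1"
  shows "AE x in measure_pmf (full m). (case x of (I, V, M, F, J) \<Rightarrow>
           int (Vtot m (Vi m V M F J I)) - int (Vtot m V)
             = of_bool (bulb m V I = 0 \<and> F) + 2 * of_bool (bulb m V I = 0 \<and> bulb m V J = 0 \<and> \<not> F)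
           \<and> Vtot m V \<le> Vtot m (Vi m V M F J I) \<and> Vtot m (Vi m V M F J I) \<le> Vtot m V + 2)"
proof (rule AE_pmfI)
  fix x assume "x \<in> set_pmf (full m)"
  then obtain I V M F J where "x = (I, V, M, F, J)" "I \<in> {1..2*m+1}" "V \<in> feasible_arrays m"
      "M \<in> {m, m+1}" "J \<in> partners m I V M"
    by (rule set_pmf_full[OF m])
  thus "case x of (I, V, M, F, J) \<Rightarrow>
          int (Vtot m (Vi m V M F J I)) - int (Vtot m V)
            = of_bool (bulb m V I = 0 \<and> F) + 2 * of_bool (bulb m V I = 0 \<and> bulb m V J = 0 \<and> \<not> F)
          \<and> Vtot m V \<le> Vtot m (Vi m V M F J I) \<and> Vtot m (Vi m V M F J I) \<le> Vtot m V + 2"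
    using Vtot_Vi[of V m M I J F] m by (auto simp: of_bool_def split: if_splits)
qed

theorem theorem3p2:
  fixes m :: nat
  assumes "m \<ge> 1"
  shows "(\<forall>i\<in>{1..2*m+1}.
            map_pmf (\<lambda>(V, M, F, J). Vi m V M F J i) (joint m i)
              = cond_pmf (V_pmf m) {V. bulb m V i = 1})
       \<and> (\<forall>g :: real \<Rightarrow> real. bounded (range g) \<and> continuous_on UNIV g \<longrightarrow>
            measure_pmf.expectation (full m)
              (\<lambda>(I, V, M, F, J). real (Vtot m V) * g (real (Vtot m V)))
            = measure_pmf.expectation (full m) (\<lambda>(I, V, M, F, J). real (Vtot m V))
              * measure_pmf.expectation (full m)
                  (\<lambda>(I, V, M, F, J). g (real (Vtot m (Vi m V M F J I)))))
       \<and> (AE x in measure_pmf (full m). (case x of (I, V, M, F, J) \<Rightarrow>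
            int (Vtot m (Vi m V M F J I)) - int (Vtot m V)
              = of_bool (bulb m V I = 0 \<and> F)
                + 2 * of_bool (bulb m V I = 0 \<and> bulb m V J = 0 \<and> \<not> F)
            \<and> Vtot m V \<le> Vtot m (Vi m V M F J I)
            \<and> Vtot m (Vi m V M F J I) \<le> Vtot m V + 2))"
  using law_Vi[OF assms] size_bias_Vs[OF assms] Vs_minus_V[OF assms] by blast

end
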